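(* Let $\Phi(u)=\mathbb{P}(\tau=\infty\mid X_0=u)$ be the survival probability of the capital process $X$ described in the context. Then $\lim_{u\to 0+}\Phi(u)=0$; in particular, setting $\Phi(0)=0$ yields a function that is right-continuous at $0$.
   Context: On a filtered probability space satisfying the usual conditions, let $W$ be a standard Brownian motion and $P_t=\sum_{i=1}^{N_t}\xi_i$ an independent compound Poisson process, where $N$ is a Poisson process with intensity $\lambda>0$ and $(\xi_i)_{i\ge1}$ are i.i.d. strictly positive random variables (independent of $N$) with distribution function $F$ (so $F(0)=0$) and finite first moment. Let $c>0$, $a\in\mathbb{R}$, $\sigma>0$. The capital process $X$ solves $dX_t=(aX_t-c)\,dt+\sigma X_t\,dW_t+dP_t$, $X_0=u\ge 0$. The ruin time is $\tau=\inf\{t\ge0: X_t\le 0\}$ (with $\inf\varnothing=\infty$), and the survival probability is $\Phi(u)=\mathbb{P}(\tau=\infty\mid X_0=u)$, extended by $\Phi(x)=0$ for $x<0$. *)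

theory Defs
  imports "HOL-Probability.Probability"
begin

definition std_brownian_motion :: "'w measure \<Rightarrow> (real \<Rightarrow> 'w \<Rightarrow> real) \<Rightarrow> bool" where
  "std_brownian_motion M W \<longleftrightarrow>
     (\<forall>t. W t \<in> borel_measurable M) \<and>
     (\<forall>\<omega>\<in>space M. W 0 \<omega> = 0 \<and> continuous_on {0..} (\<lambda>t. W t \<omega>)) \<and>
     (\<forall>s t. 0 \<le> s \<and> s < t \<longrightarrow>
        distributed M lborel (\<lambda>\<omega>. W t \<omega> - W s \<omega>) (normal_density 0 (sqrt (t - s)))) \<and>
     (\<forall>(n::nat) (ts::nat \<Rightarrow> real). 0 \<le> ts 0 \<and> (\<forall>i<n. ts i < ts (Suc i)) \<longrightarrow>
        prob_space.indep_vars M (\<lambda>_. borel) (\<lambda>i \<omega>. W (ts (Suc i)) \<omega> - W (ts i) \<omega>) {..<n})"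

text \<open>Jump times of the Poisson process built from interarrival times E:
  the (k+1)-th jump happens at E 0 + ... + E k.\<close>
definition jump_time :: "(nat \<Rightarrow> 'w \<Rightarrow> real) \<Rightarrow> nat \<Rightarrow> 'w \<Rightarrow> real" where
  "jump_time E k \<omega> = (\<Sum>i\<le>k. E i \<omega>)"

definition poisson_count :: "(nat \<Rightarrow> 'w \<Rightarrow> real) \<Rightarrow> real \<Rightarrow> 'w \<Rightarrow> nat" where
  "poisson_count E t \<omega> = card {k. jump_time E k \<omega> \<le> t}"

definition compound_poisson ::
  "(nat \<Rightarrow> 'w \<Rightarrow> real) \<Rightarrow> (nat \<Rightarrow> 'w \<Rightarrow> real) \<Rightarrow> real \<Rightarrow> 'w \<Rightarrow> real" where
  "compound_poisson E \<xi> t \<omega> = (\<Sum>k\<in>{k. jump_time E k \<omega> \<le> t}. \<xi> k \<omega>)"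

text \<open>Stochastic exponential Y_t = exp((a - sigma^2/2) t + sigma W_t),
  solution of dY = a Y dt + sigma Y dW, Y_0 = 1.\<close>
definition geo_factor :: "real \<Rightarrow> real \<Rightarrow> (real \<Rightarrow> 'w \<Rightarrow> real) \<Rightarrow> real \<Rightarrow> 'w \<Rightarrow> real" where
  "geo_factor a \<sigma> W t \<omega> = exp ((a - \<sigma>\<^sup>2 / 2) * t + \<sigma> * W t \<omega>)"

text \<open>The (pathwise, unique strong) solution of
  dX_t = (a X_t - c) dt + sigma X_t dW_t + dP_t, X_0 = u, obtained by variation of constants:
  X_t = Y_t (u - c \<integral>_0^t Y_s^{-1} ds + \<Sum>_{jumps T_k \<le> t} xi_k / Y_{T_k}).\<close>
definition capital ::
  "real \<Rightarrow> real \<Rightarrow> real \<Rightarrow> (real \<Rightarrow> 'w \<Rightarrow> real) \<Rightarrow> (nat \<Rightarrow> 'w \<Rightarrow> real) \<Rightarrow> (nat \<Rightarrow> 'w \<Rightarrow> real)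
    \<Rightarrow> real \<Rightarrow> real \<Rightarrow> 'w \<Rightarrow> real" where
  "capital a c \<sigma> W E \<xi> u t \<omega> =
     geo_factor a \<sigma> W t \<omega> *
       (u - c * integral {0..t} (\<lambda>s. 1 / geo_factor a \<sigma> W s \<omega>)
          + (\<Sum>k\<in>{k. jump_time E k \<omega> \<le> t}. \<xi> k \<omega> / geo_factor a \<sigma> W (jump_time E k \<omega>) \<omega>))"

text \<open>Survival event {tau = infinity}: the capital never drops to or below 0.\<close>
definition survival_event ::
  "'w measure \<Rightarrow> real \<Rightarrow> real \<Rightarrow> real \<Rightarrow> (real \<Rightarrow> 'w \<Rightarrow> real) \<Rightarrow> (nat \<Rightarrow> 'w \<Rightarrow> real)
    \<Rightarrow> (nat \<Rightarrow> 'w \<Rightarrow> real) \<Rightarrow> real \<Rightarrow> 'w set" where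
  "survival_event M a c \<sigma> W E \<xi> u =
     {\<omega>\<in>space M. \<forall>t\<ge>0. capital a c \<sigma> W E \<xi> u t \<omega> > 0}"

definition survival_prob ::
  "'w measure \<Rightarrow> real \<Rightarrow> real \<Rightarrow> real \<Rightarrow> (real \<Rightarrow> 'w \<Rightarrow> real) \<Rightarrow> (nat \<Rightarrow> 'w \<Rightarrow> real)
    \<Rightarrow> (nat \<Rightarrow> 'w \<Rightarrow> real) \<Rightarrow> real \<Rightarrow> real" where
  "survival_prob M a c \<sigma> W E \<xi> u =
     (if u < 0 then 0 else measure M (survival_event M a c \<sigma> W E \<xi> u))"

end

theory Submission
  imports Defs
begin

text \<open>Between two consecutive jumps the explicit solution X is continuous in time, so survival on
  each inter-jump interval is a condition on rational times and rational lower bounds. Almost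
  surely all interarrival times are positive and the jump times are unbounded; on these regular
  paths the survival event is therefore a countable combination of measurable events, and
  completeness of M takes care of the remaining null set.

  Before the first jump X_t = Y_t (u - c \<integral>_0^t 1/Y_s ds). Since Y is continuous with Y_0 = 1,
  almost every path has an n such that the first jump happens after t = 1/(n+1) and
  \<integral>_0^t 1/Y_s ds \<ge> t/2; on such a path every initial capital u \<le> c/(2(n+1)) is ruined by
  time t. The probability of these paths tends to 1 as n grows, hence \<Phi>(u) \<rightarrow> 0 as u \<rightarrow> 0+.\<close>

section \<open>Measurability and positivity of continuous paths\<close>

lemma LIMSEQ_dyadic_floor: "(\<lambda>n. real_of_int \<lfloor>t * 2 ^ n\<rfloor> / 2 ^ n) \<longlonglongrightarrow> (t::real)"
proof (rule tendsto_sandwich[of "\<lambda>n. t - 1 / 2 ^ n" _ _ "\<lambda>n. t"])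
  have "t - 1 / 2 ^ n \<le> real_of_int \<lfloor>t * 2 ^ n\<rfloor> / 2 ^ n" for n :: nat
  proof -
    have "t * 2 ^ n - 1 \<le> real_of_int \<lfloor>t * 2 ^ n\<rfloor>" by linarith
    then have "(t * 2 ^ n - 1) / 2 ^ n \<le> real_of_int \<lfloor>t * 2 ^ n\<rfloor> / 2 ^ n"
      by (intro divide_right_mono) simp_all
    then show ?thesis by (simp add: diff_divide_distrib)
  qed
  then show "\<forall>\<^sub>F n in sequentially. t - 1 / 2 ^ n \<le> real_of_int \<lfloor>t * 2 ^ n\<rfloor> / 2 ^ n"
    by simp
  have "real_of_int \<lfloor>t * 2 ^ n\<rfloor> / 2 ^ n \<le> t" for n :: nat
    by (simp add: field_simps)
  then show "\<forall>\<^sub>F n in sequentially. real_of_int \<lfloor>t * 2 ^ n\<rfloor> / 2 ^ n \<le> t"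
    by simp
  have "(\<lambda>n. t - 1 / 2 ^ n) \<longlonglongrightarrow> t - 0"
    by (intro tendsto_intros LIMSEQ_divide_realpow_zero) auto
  then show "(\<lambda>n. t - 1 / 2 ^ n) \<longlonglongrightarrow> t" by simp
qed simp

lemma borel_measurable_continuous_process:
  fixes X :: "real \<Rightarrow> 'w \<Rightarrow> real"
  assumes X: "\<And>t. X t \<in> borel_measurable M"
    and cont: "\<And>\<omega>. \<omega> \<in> space M \<Longrightarrow> continuous_on UNIV (\<lambda>t. X t \<omega>)"
  shows "(\<lambda>p. X (fst p) (snd p)) \<in> borel_measurable (borel \<Otimes>\<^sub>M M)"
proof (rule borel_measurable_LIMSEQ_real)
  fix p :: "real \<times> 'w" assume "p \<in> space (borel \<Otimes>\<^sub>M M)"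
  then have "snd p \<in> space M" by (simp add: space_pair_measure mem_Times_iff)
  then have "isCont (\<lambda>t. X t (snd p)) (fst p)"
    using cont continuous_on_eq_continuous_at by blast
  from isCont_tendsto_compose[OF this LIMSEQ_dyadic_floor]
  show "(\<lambda>n. X (real_of_int \<lfloor>fst p * 2 ^ n\<rfloor> / 2 ^ n) (snd p)) \<longlonglongrightarrow> X (fst p) (snd p)" .
next
  fix n :: nat
  show "(\<lambda>p. X (real_of_int \<lfloor>fst p * (2::real) ^ n\<rfloor> / 2 ^ n) (snd p)) \<in> borel_measurable (borel \<Otimes>\<^sub>M M)"
  proof (rule measurable_compose_countable'[where I=UNIV and f="\<lambda>k p. X (real_of_int k / 2 ^ n) (snd p)"
        and g="\<lambda>p. \<lfloor>fst p * (2::real) ^ n\<rfloor>"])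
    show "(\<lambda>p. \<lfloor>fst p * (2::real) ^ n\<rfloor>) \<in> measurable (borel \<Otimes>\<^sub>M M) (count_space UNIV)"
      by measurable
  qed (auto intro: measurable_compose[OF measurable_snd X])
qed

lemma borel_measurable_at_random_time:
  assumes "(\<lambda>p. f (fst p) (snd p)) \<in> borel_measurable (borel \<Otimes>\<^sub>M M)"
    and "\<tau> \<in> borel_measurable M"
  shows "(\<lambda>\<omega>. f (\<tau> \<omega>) \<omega>) \<in> borel_measurable M"
  using measurable_compose[OF measurable_Pair[OF assms(2) measurable_ident_sets[OF refl]] assms(1)]
  by simp

lemma borel_measurable_set_integral_param:
  fixes f :: "real \<Rightarrow> 'w \<Rightarrow> real"
  assumes [measurable]: "(\<lambda>p. f (fst p) (snd p)) \<in> borel_measurable (borel \<Otimes>\<^sub>M M)"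
    and [measurable]: "S \<in> sets borel"
  shows "(\<lambda>\<omega>. LINT s:S|lborel. f s \<omega>) \<in> borel_measurable M"
  unfolding set_lebesgue_integral_def
proof (rule lborel.borel_measurable_lebesgue_integral)
  have [measurable]: "(\<lambda>q. f (snd q) (fst q)) \<in> borel_measurable (M \<Otimes>\<^sub>M borel)"
    using measurable_compose[OF measurable_pair_swap' assms(1)] by (simp add: case_prod_beta')
  have "(\<lambda>q. indicator S (snd q) *\<^sub>R f (snd q) (fst q)) \<in> borel_measurable (M \<Otimes>\<^sub>M borel)"
    by measurable
  then show "(\<lambda>(\<omega>, s). indicator S s *\<^sub>R f s \<omega>) \<in> borel_measurable (M \<Otimes>\<^sub>M lborel)"
    by (simp add: case_prod_beta')
qed

lemma exists_rat_lower_bound: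
  fixes f :: "real \<Rightarrow> real"
  assumes cont: "continuous_on {lo..h} f" and pos: "\<And>t. t \<in> {lo..h} \<Longrightarrow> 0 < f t"
  shows "\<exists>e::rat. 0 < e \<and> (\<forall>t\<in>{lo..h}. of_rat e \<le> f t)"
proof (cases "lo \<le> h")
  case True
  then obtain x where x: "x \<in> {lo..h}" and min: "\<And>t. t \<in> {lo..h} \<Longrightarrow> f x \<le> f t"
    using continuous_attains_inf[OF _ _ cont] by auto
  obtain r where "r \<in> \<rat>" "0 < r" "r < f x"
    using Rats_dense_in_real pos[OF x] by blast
  then obtain e :: rat where "0 < e" "of_rat e < f x"
    by (auto elim!: Rats_cases)
  show ?thesis
  proof (intro exI[of _ e] conjI ballI)
    fix t assume "t \<in> {lo..h}"
    then show "of_rat e \<le> f t" using min[of t] \<open>of_rat e < f x\<close> by linarith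
  qed fact
qed (intro exI[of _ 1]; simp)

lemma ge_on_interval_if_ge_on_rats:
  fixes f :: "real \<Rightarrow> real"
  assumes cont: "continuous_on {lo..h} f" and "lo < h"
    and ge: "\<And>q::rat. of_rat q \<in> {lo..h} \<Longrightarrow> y \<le> f (of_rat q)" and t: "t \<in> {lo..h}"
  shows "y \<le> f t"
proof -
  have closure: "closure ({lo..h} \<inter> \<rat>) = {lo..h}"
    using closure_convex_Int_superset[of "{lo..h}" \<rat>] \<open>lo < h\<close> by (simp add: Rats_closure_real)
  show ?thesis
  proof (rule continuous_ge_on_closure[where S="{lo..h} \<inter> \<rat>" and f=f and x=t])
    show "continuous_on (closure ({lo..h} \<inter> \<rat>)) f" unfolding closure by (fact cont)
    show "t \<in> closure ({lo..h} \<inter> \<rat>)" unfolding closure by (fact t)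
  next
    fix x assume "x \<in> {lo..h} \<inter> \<rat>"
    then obtain q where "x = of_rat q" "of_rat q \<in> {lo..h}" by (auto elim!: Rats_cases)
    then show "y \<le> f x" using ge by simp
  qed
qed

lemma pos_on_halfopen_iff_rat_bound:
  fixes f :: "real \<Rightarrow> real"
  assumes cont: "continuous_on {lo..hi} f"
  shows "(\<forall>t\<in>{lo..<hi}. 0 < f t) \<longleftrightarrow>
    (\<forall>m::nat. \<exists>e::rat. 0 < e \<and> (\<forall>q::rat. lo \<le> of_rat q \<and> of_rat q \<le> hi - 1 / Suc m \<longrightarrow>
       of_rat e \<le> f (of_rat q)))"
proof safe
  fix m :: nat assume pos: "\<forall>t\<in>{lo..<hi}. 0 < f t"
  have "0 < f t" if "t \<in> {lo..hi - 1 / Suc m}" for t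
  proof -
    have "lo \<le> t" "t \<le> hi - 1 / Suc m" using that by auto
    moreover have "0 < 1 / real (Suc m)" by simp
    ultimately have "lo \<le> t" "t < hi" by linarith+
    then show ?thesis using pos by auto
  qed
  moreover have "continuous_on {lo..hi - 1 / Suc m} f"
    by (rule continuous_on_subset[OF cont]) auto
  ultimately obtain e :: rat where "0 < e" "\<forall>t\<in>{lo..hi - 1 / Suc m}. of_rat e \<le> f t"
    using exists_rat_lower_bound[of lo "hi - 1 / Suc m" f] by blast
  then show "\<exists>e::rat. 0 < e \<and> (\<forall>q::rat. lo \<le> of_rat q \<and> of_rat q \<le> hi - 1 / Suc m \<longrightarrow>
      of_rat e \<le> f (of_rat q))"
    by auto
next
  fix t assume bound: "\<forall>m::nat. \<exists>e::rat. 0 < e \<and> (\<forall>q::rat. lo \<le> of_rat q \<and> of_rat q \<le> hi - 1 / Suc m \<longrightarrow>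
      of_rat e \<le> f (of_rat q))"
    and t: "t \<in> {lo..<hi}"
  obtain m :: nat where "inverse (Suc m) < hi - t"
    using reals_Archimedean[of "hi - t"] t by auto
  then have "t < hi - 1 / Suc m" by (simp add: field_simps)
  obtain e :: rat where "0 < e"
    and e: "\<And>q::rat. lo \<le> of_rat q \<Longrightarrow> of_rat q \<le> hi - 1 / Suc m \<Longrightarrow> of_rat e \<le> f (of_rat q)"
    using bound by blast
  have "continuous_on {lo..hi - 1 / Suc m} f"
    by (rule continuous_on_subset[OF cont]) auto
  then have "of_rat e \<le> f t"
    by (rule ge_on_interval_if_ge_on_rats) (use t \<open>t < hi - 1 / Suc m\<close> e in auto)
  with \<open>0 < e\<close> show "0 < f t" by (meson less_le_trans zero_less_of_rat_iff)
qed

lemma integral_ge_mult_near_0: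
  fixes f :: "real \<Rightarrow> real"
  assumes cont: "continuous_on {0..} f" and y: "y < f 0"
  shows "\<exists>\<delta>>0. \<forall>t\<in>{0..\<delta>}. y * t \<le> integral {0..t} f"
proof -
  have "\<forall>e>0. \<exists>d>0. \<forall>s\<in>{0..}. dist s 0 < d \<longrightarrow> dist (f s) (f 0) < e"
    using bspec[OF cont[unfolded continuous_on_iff], of 0] by simp
  then obtain \<delta> where "\<delta> > 0" and \<delta>: "\<And>s. s \<in> {0..} \<Longrightarrow> dist s 0 < \<delta> \<Longrightarrow> dist (f s) (f 0) < f 0 - y"
    using y by (meson diff_gt_0_iff_gt)
  have "y * t \<le> integral {0..t} f" if t: "t \<in> {0..\<delta>/2}" for t
  proof -
    have "integral {0..t} (\<lambda>_. y) \<le> integral {0..t} f"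
    proof (rule integral_le)
      show "f integrable_on {0..t}"
        by (rule integrable_continuous_interval) (auto intro: continuous_on_subset[OF cont])
      fix s assume "s \<in> {0..t}"
      then show "y \<le> f s" using \<delta>[of s] t \<open>\<delta> > 0\<close> by (auto simp: dist_real_def)
    qed (rule integrable_const_ivl)
    then show ?thesis using t by (simp add: mult.commute)
  qed
  then show ?thesis using \<open>\<delta> > 0\<close> by (intro exI[of _ "\<delta>/2"]) auto
qed

lemma unbounded_partial_sums:
  fixes e :: "nat \<Rightarrow> real"
  assumes "\<And>i. 0 \<le> e i" and "\<And>m. \<exists>i\<ge>m. 1 < e i"
  shows "\<exists>k. x < (\<Sum>i\<le>k. e i)"
proof (rule ccontr)
  assume "\<nexists>k. x < (\<Sum>i\<le>k. e i)"
  then have "(\<Sum>i<n. e i) \<le> x" for n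
  proof -
    have "(\<Sum>i<n. e i) \<le> (\<Sum>i\<le>n. e i)"
      using assms(1) by (intro sum_mono2) auto
    also have "\<dots> \<le> x" using \<open>\<nexists>k. x < (\<Sum>i\<le>k. e i)\<close> by (simp add: not_less)
    finally show ?thesis .
  qed
  then have "e \<longlonglongrightarrow> 0"
    using assms(1) by (intro summable_LIMSEQ_zero summableI_nonneg_bounded)
  then have "\<forall>\<^sub>F i in sequentially. e i < 1"
    by (rule order_tendstoD(2)) simp
  then obtain m where "\<And>i. i \<ge> m \<Longrightarrow> e i < 1"
    by (auto simp: eventually_sequentially)
  then show False using assms(2) by (meson less_asym)
qed

lemma (in prob_space) indep_vars_null_all_ge:
  fixes X :: "'i \<Rightarrow> 'a \<Rightarrow> real" and f :: "nat \<Rightarrow> 'i"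
  assumes indep: "indep_vars (\<lambda>_. borel) X I" and f: "inj f" "range f \<subseteq> I"
    and A: "A \<in> sets borel"
    and q: "\<And>i. prob (X (f i) -` A \<inter> space M) \<le> q" "q < 1"
  shows "{\<omega>\<in>space M. \<forall>i\<ge>m. X (f i) \<omega> \<in> A} \<in> null_sets M"
proof -
  let ?S = "{\<omega>\<in>space M. \<forall>i\<ge>m. X (f i) \<omega> \<in> A}"
  have "X i \<in> borel_measurable M" if "i \<in> I" for i
    using indep that unfolding indep_vars_def by blast
  then have meas: "X (f i) \<in> borel_measurable M" for i
    using f(2) by blast
  have "{\<omega>\<in>space M. X (f i) \<omega> \<in> A} \<in> sets M" for i
    using measurable_sets[OF meas A] by (simp add: vimage_def Int_def conj_commute)
  then have "{\<omega>\<in>space M. \<forall>i\<in>{m..}. X (f i) \<omega> \<in> A} \<in> sets M"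
    by (intro sets.sets_Collect_countable_All' countableI_type)
  then have S: "?S \<in> sets M" unfolding Ball_def atLeast_iff .
  have "prob ?S \<le> q ^ Suc n" for n
  proof -
    let ?J = "f ` {m..m + n}"
    have "?S \<subseteq> (\<Inter>j\<in>?J. X j -` A \<inter> space M)" by auto
    moreover have "(\<Inter>j\<in>?J. X j -` A \<inter> space M) \<in> sets M"
      using measurable_sets[OF meas A] by (intro sets.finite_INT) auto
    ultimately have "prob ?S \<le> prob (\<Inter>j\<in>?J. X j -` A \<inter> space M)"
      by (rule finite_measure_mono)
    also have "\<dots> = (\<Prod>j\<in>?J. prob (X j -` A \<inter> space M))"
      using f(2) A by (intro indep_varsD[OF indep]) auto
    also have "\<dots> = (\<Prod>i\<in>{m..m + n}. prob (X (f i) -` A \<inter> space M))"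
      by (simp add: prod.reindex[OF inj_on_subset[OF f(1) subset_UNIV]])
    also have "\<dots> \<le> (\<Prod>i\<in>{m..m + n}. q)"
      using q(1) by (intro prod_mono) auto
    finally show ?thesis by simp
  qed
  moreover have "0 \<le> q" using q(1)[of 0] measure_nonneg order_trans by blast
  then have "(\<lambda>n. q ^ Suc n) \<longlonglongrightarrow> 0"
    using q(2) by (intro LIMSEQ_Suc LIMSEQ_power_zero) simp
  ultimately have "prob ?S \<le> 0"
    by (intro LIMSEQ_le_const) auto
  then have "emeasure M ?S = 0"
    unfolding emeasure_eq_measure using measure_nonneg[of M ?S] by (intro antisym) auto
  then show ?thesis using S by (rule null_setsI)
qed

section \<open>Jump times\<close>

lemma jump_time_0 [simp]: "jump_time E 0 \<omega> = E 0 \<omega>"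
  by (simp add: jump_time_def)

lemma jump_time_Suc: "jump_time E (Suc k) \<omega> = jump_time E k \<omega> + E (Suc k) \<omega>"
  by (simp add: jump_time_def)

lemma strict_mono_jump_time:
  assumes "\<And>i. 0 < E i \<omega>"
  shows "strict_mono (\<lambda>k. jump_time E k \<omega>)"
  using assms by (intro strict_monoI_Suc) (simp add: jump_time_Suc)

definition prev_jump_time :: "(nat \<Rightarrow> 'w \<Rightarrow> real) \<Rightarrow> nat \<Rightarrow> 'w \<Rightarrow> real" where
  "prev_jump_time E k \<omega> = (if k = 0 then 0 else jump_time E (k - 1) \<omega>)"

lemma prev_jump_time_nonneg:
  assumes "\<And>i. 0 < E i \<omega>"
  shows "0 \<le> prev_jump_time E k \<omega>"
proof -
  have "jump_time E 0 \<omega> \<le> jump_time E (k - 1) \<omega>"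
    using strict_mono_less_eq[OF strict_mono_jump_time[of E \<omega>, OF assms], of 0 "k - 1"] by simp
  then show ?thesis using assms[of 0] by (simp add: prev_jump_time_def)
qed

lemma jumps_before_eq:
  assumes "\<And>i. 0 < E i \<omega>" and "prev_jump_time E k \<omega> \<le> t" "t < jump_time E k \<omega>"
  shows "{j. jump_time E j \<omega> \<le> t} = {..<k}"
proof -
  have mono: "strict_mono (\<lambda>k. jump_time E k \<omega>)"
    using assms(1) by (rule strict_mono_jump_time)
  have "jump_time E j \<omega> \<le> t \<longleftrightarrow> j < k" for j
  proof
    assume "jump_time E j \<omega> \<le> t"
    then show "j < k" using assms(3) strict_mono_less[OF mono, of j k] by auto
  next
    assume "j < k"
    then have "jump_time E j \<omega> \<le> jump_time E (k - 1) \<omega>"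
      using strict_mono_less_eq[OF mono] by simp
    then show "jump_time E j \<omega> \<le> t" using assms(2) \<open>j < k\<close> by (simp add: prev_jump_time_def)
  qed
  then show ?thesis by auto
qed

lemma exists_jump_interval:
  assumes "0 \<le> t" and "t < jump_time E k0 \<omega>"
  shows "\<exists>k. prev_jump_time E k \<omega> \<le> t \<and> t < jump_time E k \<omega>"
proof -
  define k where "k = (LEAST k. t < jump_time E k \<omega>)"
  have "t < jump_time E k \<omega>" unfolding k_def by (rule LeastI) fact
  moreover have "prev_jump_time E k \<omega> \<le> t"
  proof (cases k)
    case (Suc j)
    then have "\<not> t < jump_time E j \<omega>"
      using not_less_Least[of j "\<lambda>k. t < jump_time E k \<omega>"] unfolding k_def by simp
    then show ?thesis using Suc by (simp add: prev_jump_time_def)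
  qed (simp add: prev_jump_time_def assms(1))
  ultimately show ?thesis by blast
qed

section \<open>Survival of the capital process\<close>

locale ruin_model = prob_space M for M :: "'w measure" +
  fixes W :: "real \<Rightarrow> 'w \<Rightarrow> real" and E \<xi> :: "nat \<Rightarrow> 'w \<Rightarrow> real" and lam c a \<sigma> :: real
  assumes W_measurable [measurable]: "\<And>t. W t \<in> borel_measurable M"
    and W_0: "\<And>\<omega>. \<omega> \<in> space M \<Longrightarrow> W 0 \<omega> = 0"
    and W_continuous: "\<And>\<omega>. \<omega> \<in> space M \<Longrightarrow> continuous_on {0..} (\<lambda>t. W t \<omega>)"
    and lam: "0 < lam"
    and E_distributed: "\<And>n. distributed M lborel (E n) (exponential_density lam)"
    and \<xi>_measurable [measurable]: "\<And>n. \<xi> n \<in> borel_measurable M"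
    and indep_E_\<xi>: "indep_vars (\<lambda>_. borel) (\<lambda>i \<omega>. case i of Inl n \<Rightarrow> E n \<omega> | Inr n \<Rightarrow> \<xi> n \<omega>) UNIV"
begin

lemma E_measurable [measurable]: "E n \<in> borel_measurable M"
  using distributed_measurable[OF E_distributed[of n]] by simp

lemma jump_time_measurable [measurable]: "jump_time E k \<in> borel_measurable M"
  unfolding jump_time_def by measurable

lemma prev_jump_time_measurable [measurable]: "prev_jump_time E k \<in> borel_measurable M"
  unfolding prev_jump_time_def by measurable

definition regular_paths :: "'w set" where
  "regular_paths = {\<omega>\<in>space M. (\<forall>i. 0 < E i \<omega>) \<and> (\<forall>n::nat. \<exists>k. real n < jump_time E k \<omega>)}"

lemma regular_paths_sets [measurable]: "regular_paths \<in> sets M"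
  unfolding regular_paths_def by measurable

lemma regular_pathsD:
  assumes "\<omega> \<in> regular_paths"
  shows "\<omega> \<in> space M" "\<And>i. 0 < E i \<omega>" "\<And>t. \<exists>k. t < jump_time E k \<omega>"
proof -
  show "\<omega> \<in> space M" "\<And>i. 0 < E i \<omega>" using assms by (auto simp: regular_paths_def)
  fix t :: real
  obtain n :: nat where "t < n" using reals_Archimedean2 by blast
  moreover obtain k where "real n < jump_time E k \<omega>" using assms by (auto simp: regular_paths_def)
  ultimately show "\<exists>k. t < jump_time E k \<omega>" by (auto intro: less_trans)
qed

lemma null_sets_E_nonpos: "{\<omega>\<in>space M. E n \<omega> \<le> 0} \<in> null_sets M"
proof -
  have "prob {\<omega>\<in>space M. E n \<omega> \<le> 0} = 0"
    using exponential_distributedD_le[OF E_distributed[of n] order_refl lam] by simp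
  then show ?thesis by (intro null_setsI) (auto simp: emeasure_eq_measure)
qed

lemma null_sets_E_eventually_le_1: "{\<omega>\<in>space M. \<forall>i\<ge>m. E i \<omega> \<le> 1} \<in> null_sets M"
proof -
  have "prob ((\<lambda>i \<omega>. case i of Inl n \<Rightarrow> E n \<omega> | Inr n \<Rightarrow> \<xi> n \<omega>) (Inl i) -` {..1} \<inter> space M)
      = 1 - exp (- 1 * lam)" for i
    using exponential_distributedD_le[OF E_distributed[of i] zero_le_one lam]
    by (simp add: vimage_def Int_def conj_commute)
  then show ?thesis
    using indep_vars_null_all_ge[OF indep_E_\<xi>, of Inl "{..1}" "1 - exp (- 1 * lam)" m] lam
    by simp
qed

lemma null_sets_compl_regular_paths: "space M - regular_paths \<in> null_sets M"
proof -
  let ?N = "(\<Union>n. {\<omega>\<in>space M. E n \<omega> \<le> 0}) \<union> (\<Union>m. {\<omega>\<in>space M. \<forall>i\<ge>m. E i \<omega> \<le> 1})"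
  have sub: "space M - regular_paths \<subseteq> ?N"
  proof
    fix \<omega> assume \<omega>: "\<omega> \<in> space M - regular_paths"
    show "\<omega> \<in> ?N"
    proof (rule ccontr)
      assume "\<omega> \<notin> ?N"
      then have pos: "\<And>i. 0 < E i \<omega>" and often: "\<And>m. \<exists>i\<ge>m. 1 < E i \<omega>"
        using \<omega> by (auto simp: not_le)
      have "\<exists>k. real n < jump_time E k \<omega>" for n :: nat
        unfolding jump_time_def using pos often by (intro unbounded_partial_sums less_imp_le)
      then show False using \<omega> pos by (auto simp: regular_paths_def)
    qed
  qed
  have null: "?N \<in> null_sets M"
    using null_sets_E_nonpos null_sets_E_eventually_le_1 by (intro null_sets.Un null_sets_UN)
  have "space M - regular_paths \<in> sets M" by measurable
  from null this sub show ?thesis by (rule null_sets_subset)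
qed

lemma prob_regular_paths: "prob regular_paths = 1"
  using prob_compl[OF regular_paths_sets] null_sets_compl_regular_paths
  by (simp add: measure_eq_0_null_sets)

text \<open>The factor geo_factor, with W frozen at time 0 for negative times so that its paths are
  continuous on the whole real line.\<close>
definition geo :: "real \<Rightarrow> 'w \<Rightarrow> real" where
  "geo t \<omega> = exp ((a - \<sigma>\<^sup>2 / 2) * t + \<sigma> * W (max 0 t) \<omega>)"

definition geo_inv_integral :: "real \<Rightarrow> 'w \<Rightarrow> real" where
  "geo_inv_integral t \<omega> = integral {0..t} (\<lambda>s. 1 / geo s \<omega>)"

definition capital_segment :: "real \<Rightarrow> nat \<Rightarrow> real \<Rightarrow> 'w \<Rightarrow> real" where
  "capital_segment u k t \<omega> =
     geo t \<omega> * (u - c * geo_inv_integral t \<omega> + (\<Sum>j<k. \<xi> j \<omega> / geo (jump_time E j \<omega>) \<omega>))"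

lemma geo_factor_eq_geo: "0 \<le> t \<Longrightarrow> geo_factor a \<sigma> W t \<omega> = geo t \<omega>"
  by (simp add: geo_factor_def geo_def)

lemma geo_pos: "0 < geo t \<omega>"
  by (simp add: geo_def)

lemma geo_0: "\<omega> \<in> space M \<Longrightarrow> geo 0 \<omega> = 1"
  by (simp add: geo_def W_0)

lemma continuous_on_W_max_0: "\<omega> \<in> space M \<Longrightarrow> continuous_on UNIV (\<lambda>t. W (max 0 t) \<omega>)"
  by (rule continuous_on_compose2[OF W_continuous]) (auto intro!: continuous_intros)

lemma continuous_on_geo: "\<omega> \<in> space M \<Longrightarrow> continuous_on UNIV (\<lambda>t. geo t \<omega>)"
  unfolding geo_def by (intro continuous_intros continuous_on_W_max_0)

lemma continuous_on_inverse_geo: "\<omega> \<in> space M \<Longrightarrow> continuous_on S (\<lambda>t. 1 / geo t \<omega>)"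
  using continuous_on_subset[OF continuous_on_geo] geo_pos
  by (intro continuous_intros) (auto simp: less_imp_neq[symmetric])

lemma geo_joint_measurable: "(\<lambda>p. geo (fst p) (snd p)) \<in> borel_measurable (borel \<Otimes>\<^sub>M M)"
proof -
  have "(\<lambda>p. W (max 0 (fst p)) (snd p)) \<in> borel_measurable (borel \<Otimes>\<^sub>M M)"
    by (rule borel_measurable_continuous_process) (auto intro: continuous_on_W_max_0)
  then show ?thesis unfolding geo_def by measurable
qed

lemma geo_at_random_time_measurable [measurable (raw)]:
  "\<tau> \<in> borel_measurable M \<Longrightarrow> (\<lambda>\<omega>. geo (\<tau> \<omega>) \<omega>) \<in> borel_measurable M"
  by (rule borel_measurable_at_random_time[OF geo_joint_measurable])

lemma geo_inv_integral_measurable [measurable]: "geo_inv_integral t \<in> borel_measurable M"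
proof -
  have "(\<lambda>p. 1 / geo (fst p) (snd p)) \<in> borel_measurable (borel \<Otimes>\<^sub>M M)"
    using geo_joint_measurable by measurable
  then have meas: "(\<lambda>\<omega>. LINT s:{0..t}|lborel. 1 / geo s \<omega>) \<in> borel_measurable M"
    by (rule borel_measurable_set_integral_param) simp
  have eq: "geo_inv_integral t \<omega> = (LINT s:{0..t}|lborel. 1 / geo s \<omega>)" if "\<omega> \<in> space M" for \<omega>
  proof -
    have "set_integrable lborel {0..t} (\<lambda>s. 1 / geo s \<omega>)"
      unfolding set_integrable_def
      by (intro borel_integrable_compact continuous_on_inverse_geo that) auto
    then show ?thesis
      unfolding geo_inv_integral_def by (simp add: set_borel_integral_eq_integral(2))
  qed
  from meas show ?thesis by (rule measurable_cong[THEN iffD1, rotated]) (simp add: eq)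
qed

lemma capital_segment_measurable [measurable]: "capital_segment u k t \<in> borel_measurable M"
  unfolding capital_segment_def by measurable

lemma continuous_on_geo_inv_integral:
  "\<omega> \<in> space M \<Longrightarrow> continuous_on {0..h} (\<lambda>t. geo_inv_integral t \<omega>)"
  unfolding geo_inv_integral_def
  by (intro indefinite_integral_continuous_1 integrable_continuous_interval continuous_on_inverse_geo)

lemma continuous_on_capital_segment:
  "\<omega> \<in> space M \<Longrightarrow> 0 \<le> l \<Longrightarrow> continuous_on {l..h} (\<lambda>t. capital_segment u k t \<omega>)"
  unfolding capital_segment_def
  by (intro continuous_intros continuous_on_subset[OF continuous_on_geo]
      continuous_on_subset[OF continuous_on_geo_inv_integral]) auto

lemma capital_eq_capital_segment:
  assumes "\<omega> \<in> regular_paths" and "prev_jump_time E k \<omega> \<le> t" "t < jump_time E k \<omega>"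
  shows "capital a c \<sigma> W E \<xi> u t \<omega> = capital_segment u k t \<omega>"
proof -
  have pos: "\<And>i. 0 < E i \<omega>" using regular_pathsD(2)[OF assms(1)] .
  have "0 \<le> t" using prev_jump_time_nonneg[of E \<omega>, OF pos, of k] assms(2) by linarith
  have "0 \<le> jump_time E j \<omega>" for j
    using prev_jump_time_nonneg[of E \<omega>, OF pos, of "Suc j"] by (simp add: prev_jump_time_def)
  moreover have "integral {0..t} (\<lambda>s. 1 / geo_factor a \<sigma> W s \<omega>) = geo_inv_integral t \<omega>"
    unfolding geo_inv_integral_def by (rule integral_cong) (simp add: geo_factor_eq_geo)
  ultimately show ?thesis
    unfolding capital_def capital_segment_def jumps_before_eq[OF pos assms(2,3)]
    using \<open>0 \<le> t\<close> by (simp add: geo_factor_eq_geo)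
qed

definition rational_survival :: "real \<Rightarrow> 'w set" where
  "rational_survival u = {\<omega>\<in>regular_paths. \<forall>k. \<forall>m::nat. \<exists>e::rat. 0 < e \<and>
     (\<forall>q::rat. prev_jump_time E k \<omega> \<le> of_rat q \<and> of_rat q \<le> jump_time E k \<omega> - 1 / Suc m \<longrightarrow>
        of_rat e \<le> capital_segment u k (of_rat q) \<omega>)}"

lemma rational_survival_sets [measurable]: "rational_survival u \<in> sets M"
  unfolding rational_survival_def by measurable

lemma survival_event_iff_rational_survival:
  assumes \<omega>: "\<omega> \<in> regular_paths"
  shows "\<omega> \<in> survival_event M a c \<sigma> W E \<xi> u \<longleftrightarrow> \<omega> \<in> rational_survival u"
proof -
  note pos = regular_pathsD(2)[OF \<omega>]
  have "\<omega> \<in> survival_event M a c \<sigma> W E \<xi> u \<longleftrightarrow>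
      (\<forall>k. \<forall>t\<in>{prev_jump_time E k \<omega>..<jump_time E k \<omega>}. 0 < capital_segment u k t \<omega>)"
  proof
    assume surv: "\<omega> \<in> survival_event M a c \<sigma> W E \<xi> u"
    show "\<forall>k. \<forall>t\<in>{prev_jump_time E k \<omega>..<jump_time E k \<omega>}. 0 < capital_segment u k t \<omega>"
    proof (intro allI ballI)
      fix k t assume t: "t \<in> {prev_jump_time E k \<omega>..<jump_time E k \<omega>}"
      then have "0 \<le> t" using prev_jump_time_nonneg[of E \<omega>, OF pos, of k] by simp
      then have "0 < capital a c \<sigma> W E \<xi> u t \<omega>"
        using surv by (simp add: survival_event_def)
      then show "0 < capital_segment u k t \<omega>"
        using capital_eq_capital_segment[OF \<omega>, of k t u] t by simp
    qed
  next
    assume segs: "\<forall>k. \<forall>t\<in>{prev_jump_time E k \<omega>..<jump_time E k \<omega>}. 0 < capital_segment u k t \<omega>"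
    have "0 < capital a c \<sigma> W E \<xi> u t \<omega>" if t: "0 \<le> t" for t
    proof -
      obtain k0 where "t < jump_time E k0 \<omega>" using regular_pathsD(3)[OF \<omega>] by blast
      from exists_jump_interval[OF t this]
      obtain k where "prev_jump_time E k \<omega> \<le> t" "t < jump_time E k \<omega>" by blast
      with segs show ?thesis using capital_eq_capital_segment[OF \<omega>, of k t u] by simp
    qed
    then show "\<omega> \<in> survival_event M a c \<sigma> W E \<xi> u"
      using regular_pathsD(1)[OF \<omega>] by (simp add: survival_event_def)
  qed
  also have "\<dots> \<longleftrightarrow> \<omega> \<in> rational_survival u"
    using pos_on_halfopen_iff_rat_bound[OF continuous_on_capital_segment
        [OF regular_pathsD(1)[OF \<omega>] prev_jump_time_nonneg[of E \<omega>, OF pos]]] \<omega>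
    unfolding rational_survival_def by simp
  finally show ?thesis .
qed

lemma survival_event_sets:
  assumes "complete_measure M"
  shows "survival_event M a c \<sigma> W E \<xi> u \<in> sets M"
proof -
  have "survival_event M a c \<sigma> W E \<xi> u - regular_paths \<subseteq> space M - regular_paths"
    by (auto simp: survival_event_def)
  then have "survival_event M a c \<sigma> W E \<xi> u - regular_paths \<in> sets M"
    using complete_measure.complete[OF assms _ null_sets_compl_regular_paths] by blast
  moreover have "survival_event M a c \<sigma> W E \<xi> u =
      rational_survival u \<union> (survival_event M a c \<sigma> W E \<xi> u - regular_paths)"
    using survival_event_iff_rational_survival by (auto simp: rational_survival_def)
  ultimately show ?thesis by (metis sets.Un rational_survival_sets)
qed

text \<open>Quantifying over all m \<ge> n makes the family increasing.\<close>
definition early_ruin_paths :: "nat \<Rightarrow> 'w set" where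
  "early_ruin_paths n = {\<omega>\<in>regular_paths. \<forall>m\<ge>n.
     1 / Suc m < E 0 \<omega> \<and> 1 / Suc m \<le> 2 * geo_inv_integral (1 / Suc m) \<omega>}"

lemma early_ruin_paths_sets [measurable]: "early_ruin_paths n \<in> sets M"
  unfolding early_ruin_paths_def by measurable

lemma incseq_early_ruin_paths: "incseq early_ruin_paths"
  by (auto simp: incseq_def early_ruin_paths_def)

lemma regular_paths_subset_early_ruin_paths: "regular_paths \<subseteq> (\<Union>n. early_ruin_paths n)"
proof
  fix \<omega> assume \<omega>: "\<omega> \<in> regular_paths"
  note \<omega>_space = regular_pathsD(1)[OF \<omega>]
  obtain \<delta> where "0 < \<delta>" and \<delta>: "\<And>t. t \<in> {0..\<delta>} \<Longrightarrow> 1 / 2 * t \<le> geo_inv_integral t \<omega>"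
    using integral_ge_mult_near_0[OF continuous_on_inverse_geo[OF \<omega>_space], of "1 / 2"]
    by (auto simp: geo_0[OF \<omega>_space] geo_inv_integral_def)
  obtain n :: nat where n: "inverse (Suc n) < min \<delta> (E 0 \<omega>)"
    using reals_Archimedean[of "min \<delta> (E 0 \<omega>)"] \<open>0 < \<delta>\<close> regular_pathsD(2)[OF \<omega>] by auto
  have "1 / Suc m < E 0 \<omega> \<and> 1 / Suc m \<le> 2 * geo_inv_integral (1 / Suc m) \<omega>" if "n \<le> m" for m
  proof -
    have "1 / Suc m \<le> 1 / Suc n" using that by (simp add: frac_le)
    then have "1 / Suc m < min \<delta> (E 0 \<omega>)" using n by (simp add: inverse_eq_divide)
    then have "1 / Suc m < E 0 \<omega>" "1 / 2 * (1 / Suc m) \<le> geo_inv_integral (1 / Suc m) \<omega>"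
      using \<delta>[of "1 / Suc m"] by auto
    then show ?thesis by linarith
  qed
  with \<omega> show "\<omega> \<in> (\<Union>n. early_ruin_paths n)" by (auto simp: early_ruin_paths_def)
qed

lemma prob_early_ruin_paths_tendsto_1: "(\<lambda>n. prob (early_ruin_paths n)) \<longlonglongrightarrow> 1"
proof -
  have "prob regular_paths \<le> prob (\<Union>n. early_ruin_paths n)"
    using regular_paths_subset_early_ruin_paths by (intro finite_measure_mono) auto
  then have "prob (\<Union>n. early_ruin_paths n) = 1"
    using prob_regular_paths by (intro antisym) auto
  moreover have "(\<lambda>n. prob (early_ruin_paths n)) \<longlonglongrightarrow> prob (\<Union>n. early_ruin_paths n)"
    using incseq_early_ruin_paths by (intro finite_Lim_measure_incseq) auto
  ultimately show ?thesis by simp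
qed

lemma early_ruin_paths_not_survival:
  assumes \<omega>: "\<omega> \<in> early_ruin_paths n" and "0 < c" and u: "u \<le> c / (2 * Suc n)"
  shows "\<omega> \<notin> survival_event M a c \<sigma> W E \<xi> u"
proof
  define t where "t = 1 / real (Suc n)"
  have reg: "\<omega> \<in> regular_paths" and "t < E 0 \<omega>" and t_le: "t \<le> 2 * geo_inv_integral t \<omega>"
    using \<omega> by (auto simp: early_ruin_paths_def t_def)
  assume "\<omega> \<in> survival_event M a c \<sigma> W E \<xi> u"
  then have "0 < capital a c \<sigma> W E \<xi> u t \<omega>" by (simp add: survival_event_def t_def)
  also have "\<dots> = geo t \<omega> * (u - c * geo_inv_integral t \<omega>)"
    using capital_eq_capital_segment[OF reg, of 0 t] \<open>t < E 0 \<omega>\<close>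
    by (simp add: prev_jump_time_def capital_segment_def t_def)
  finally have "c * geo_inv_integral t \<omega> < u"
    using geo_pos[of t \<omega>] by (simp add: zero_less_mult_iff)
  moreover have "c * t \<le> 2 * (c * geo_inv_integral t \<omega>)"
    using mult_left_mono[OF t_le, of c] \<open>0 < c\<close> by simp
  moreover have "c / (2 * Suc n) = c * t / 2" by (simp add: t_def)
  ultimately show False using u by linarith
qed

lemma survival_prob_tendsto_0:
  assumes "0 < c"
  shows "(survival_prob M a c \<sigma> W E \<xi> \<longlongrightarrow> 0) (at_right 0)"
proof (rule tendstoI)
  fix e :: real assume "0 < e"
  then obtain n where n: "1 - e < prob (early_ruin_paths n)"
    using order_tendstoD(1)[OF prob_early_ruin_paths_tendsto_1, of "1 - e"]
    by (auto simp: eventually_sequentially)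
  have "survival_prob M a c \<sigma> W E \<xi> u < e" if "0 < u" "u < c / (2 * Suc n)" for u
  proof -
    have "survival_event M a c \<sigma> W E \<xi> u \<subseteq> space M - early_ruin_paths n"
      using early_ruin_paths_not_survival[OF _ assms, of _ n u] that
      by (auto simp: survival_event_def)
    then have "prob (survival_event M a c \<sigma> W E \<xi> u) \<le> prob (space M - early_ruin_paths n)"
      by (intro finite_measure_mono) auto
    also have "\<dots> = 1 - prob (early_ruin_paths n)" by (simp add: prob_compl)
    finally show ?thesis using n that by (simp add: survival_prob_def)
  qed
  then show "\<forall>\<^sub>F u in at_right 0. dist (survival_prob M a c \<sigma> W E \<xi> u) 0 < e"
    unfolding eventually_at_right_field using assms
    by (intro exI[of _ "c / (2 * Suc n)"]) (auto simp: dist_real_def survival_prob_def measure_nonneg)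
qed

end

theorem lemma1:
  fixes M :: "'w measure"
    and W :: "real \<Rightarrow> 'w \<Rightarrow> real"
    and E :: "nat \<Rightarrow> 'w \<Rightarrow> real"
    and \<xi> :: "nat \<Rightarrow> 'w \<Rightarrow> real"
    and lam c a \<sigma> :: real
  assumes "prob_space M"
    and "complete_measure M"
    and "std_brownian_motion M W"
    and "lam > 0"
    and "\<And>n. distributed M lborel (E n) (exponential_density lam)"
    and "\<And>n. \<xi> n \<in> borel_measurable M"
    and "\<And>n. distr M borel (\<xi> n) = distr M borel (\<xi> 0)"
    and "\<And>n \<omega>. \<omega> \<in> space M \<Longrightarrow> \<xi> n \<omega> > 0"
    and "integrable M (\<xi> 0)"
    and "prob_space.indep_vars M (\<lambda>_. borel)
           (\<lambda>i \<omega>. case i of Inl n \<Rightarrow> E n \<omega> | Inr n \<Rightarrow> \<xi> n \<omega>) UNIV"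
    and "prob_space.indep_set M
           (sigma_sets (space M) {W t -` A \<inter> space M | t A. t \<ge> 0 \<and> A \<in> sets borel})
           (sigma_sets (space M) {X -` A \<inter> space M | X A.
              (\<exists>n. X = E n \<or> X = \<xi> n) \<and> A \<in> sets borel})"
    and "c > 0" and "\<sigma> > 0"
  shows "(\<forall>u\<ge>0. survival_event M a c \<sigma> W E \<xi> u \<in> sets M) \<and>
         ((survival_prob M a c \<sigma> W E \<xi> \<longlongrightarrow> 0) (at_right 0))"
proof -
  have "\<And>t. W t \<in> borel_measurable M"
    and "\<And>\<omega>. \<omega> \<in> space M \<Longrightarrow> W 0 \<omega> = 0 \<and> continuous_on {0..} (\<lambda>t. W t \<omega>)"
    using assms(3) unfolding std_brownian_motion_def by blast+
  then interpret ruin_model M W E \<xi> lam c a \<sigma>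
    unfolding ruin_model_def ruin_model_axioms_def using assms(1,4,5,6,10) by simp
  show ?thesis
    using survival_event_sets[OF assms(2)] survival_prob_tendsto_0[OF assms(12)] by blast
qed

end
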